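(* Let $k$ be sufficiently large and suppose $m/n\geq 195\cdot 2^k\ln^2 k/k$. Then the random formula $\Phi=\Phi_k(n,m)$ is quasirandom with high probability (as $n\to\infty$).
   Context: $\Phi=\Phi_k(n,m)$ is a uniformly random $k$-CNF with $m$ clauses of $k$ literals each over $x_1,\dots,x_n$ (uniform among all $(2n)^{km}$ such formulas). Set $\rho=2^{-k}m/n$, $\kappa=\ln k/k$. For $\sigma\in\{0,1\}^n$, $U_\Phi(\sigma)$ is the set of indices of clauses unsatisfied by $\sigma$, $\mathcal U_\Phi(\sigma)=|U_\Phi(\sigma)|$, and $T(\Phi)=\{\tau:\mathcal U_\Phi(\tau)\le n\rho/10\}$. $\mathrm{dist}$ is Hamming distance, $\Delta(\sigma,\tau)$ the set of variables where $\sigma,\tau$ differ, $\mathcal D_\sigma(r_1,r_2)=\{\tau:\lfloor r_1\kappa n\rfloor\le \mathrm{dist}(\sigma,\tau)\le\lfloor r_2\kappa n\rfloor\}$. For a set of variables $W$, $X_\Phi(W,\sigma)=\sum_{i\in U_\Phi(\sigma)}\sum_{j\in[k]}\mathbf 1\{|\Phi_{ij}|\in W\}$, where $|\Phi_{ij}|$ is the variable of the $j$th literal of clause $i$. A mist of $\Phi$ is a set $\mathcal M\subseteq T(\Phi)$ such that (MI1) distinct elements of $\mathcal M$ have distance at least $2\kappa n$ and (MI2) every $\sigma\in T(\Phi)$ has some $\mu\in\mathcal M$ with $\mathrm{dist}(\mu,\sigma)\le2\kappa n$. $\mathcal D(\Phi,\mathcal M)=\bigcup_{\sigma\in\mathcal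 M}\mathcal D_\sigma(0,10)$. $\Phi$ is quasirandom if there is a mist $\mathcal M$ with: (Q1) $|\mathcal D(\Phi,\mathcal M)|\le 2^n\exp(-2n/k^2)$; (Q2) for all $\tau\in\{0,1\}^n$, $|\mathcal M\cap \mathcal D_\tau(0,10)|\le k$; (Q3) for every $\mu\in\mathcal M$ and $\sigma\in\mathcal D_\mu(0,100)\setminus T(\Phi)$, $X_\Phi(\Delta(\mu,\sigma),\sigma)\le k\,\mathcal U_\Phi(\sigma)/10$. *)

theory Defs
  imports "HOL-Analysis.Analysis"
begin

(* A literal is a pair (variable index in {0..<n}, sign); sign True = positive literal x_v,
   sign False = negated literal. A k-CNF with m clauses over n variables is a function
   Phi mapping (i,j), i<m, j<k, to the j-th literal of clause i (extensional outside). *)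
type_synonym formula = "nat \<times> nat \<Rightarrow> nat \<times> bool"
type_synonym assignment = "nat \<Rightarrow> bool"

definition formulas :: "nat \<Rightarrow> nat \<Rightarrow> nat \<Rightarrow> formula set" where
  "formulas k n m = ({..<m} \<times> {..<k}) \<rightarrow>\<^sub>E ({..<n} \<times> (UNIV :: bool set))"

definition assignments :: "nat \<Rightarrow> assignment set" where
  "assignments n = {..<n} \<rightarrow>\<^sub>E (UNIV :: bool set)"

definition hdist :: "nat \<Rightarrow> assignment \<Rightarrow> assignment \<Rightarrow> nat" where
  "hdist n \<sigma> \<tau> = card {v \<in> {..<n}. \<sigma> v \<noteq> \<tau> v}"

definition Delta :: "nat \<Rightarrow> assignment \<Rightarrow> assignment \<Rightarrow> nat set" where
  "Delta n \<sigma> \<tau> = {v \<in> {..<n}. \<sigma> v \<noteq> \<tau> v}"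

definition rho :: "nat \<Rightarrow> nat \<Rightarrow> nat \<Rightarrow> real" where
  "rho k n m = real m / (2 ^ k * real n)"

definition kappa :: "nat \<Rightarrow> real" where
  "kappa k = ln (real k) / real k"

definition Unsat :: "nat \<Rightarrow> nat \<Rightarrow> formula \<Rightarrow> assignment \<Rightarrow> nat set" where
  "Unsat k m \<Phi> \<sigma> = {i \<in> {..<m}. \<forall>j<k. \<sigma> (fst (\<Phi> (i, j))) \<noteq> snd (\<Phi> (i, j))}"

definition nUnsat :: "nat \<Rightarrow> nat \<Rightarrow> formula \<Rightarrow> assignment \<Rightarrow> nat" where
  "nUnsat k m \<Phi> \<sigma> = card (Unsat k m \<Phi> \<sigma>)"

definition Tset :: "nat \<Rightarrow> nat \<Rightarrow> nat \<Rightarrow> formula \<Rightarrow> assignment set" where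
  "Tset k n m \<Phi> = {\<tau> \<in> assignments n. real (nUnsat k m \<Phi> \<tau>) \<le> real n * rho k n m / 10}"

definition Dball :: "nat \<Rightarrow> nat \<Rightarrow> assignment \<Rightarrow> real \<Rightarrow> real \<Rightarrow> assignment set" where
  "Dball k n \<sigma> r1 r2 = {\<tau> \<in> assignments n.
      \<lfloor>r1 * kappa k * real n\<rfloor> \<le> int (hdist n \<sigma> \<tau>) \<and> int (hdist n \<sigma> \<tau>) \<le> \<lfloor>r2 * kappa k * real n\<rfloor>}"

definition Xcount :: "nat \<Rightarrow> nat \<Rightarrow> formula \<Rightarrow> nat set \<Rightarrow> assignment \<Rightarrow> nat" where
  "Xcount k m \<Phi> W \<sigma> = (\<Sum>i\<in>Unsat k m \<Phi> \<sigma>. card {j \<in> {..<k}. fst (\<Phi> (i, j)) \<in> W})"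

definition is_mist :: "nat \<Rightarrow> nat \<Rightarrow> nat \<Rightarrow> formula \<Rightarrow> assignment set \<Rightarrow> bool" where
  "is_mist k n m \<Phi> M \<longleftrightarrow> M \<subseteq> Tset k n m \<Phi> \<and>
     (\<forall>\<mu>\<in>M. \<forall>\<nu>\<in>M. \<mu> \<noteq> \<nu> \<longrightarrow> real (hdist n \<mu> \<nu>) \<ge> 2 * kappa k * real n) \<and>
     (\<forall>\<sigma>\<in>Tset k n m \<Phi>. \<exists>\<mu>\<in>M. real (hdist n \<mu> \<sigma>) \<le> 2 * kappa k * real n)"

definition Dmist :: "nat \<Rightarrow> nat \<Rightarrow> assignment set \<Rightarrow> assignment set" where
  "Dmist k n M = (\<Union>\<sigma>\<in>M. Dball k n \<sigma> 0 10)"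

definition quasirandom :: "nat \<Rightarrow> nat \<Rightarrow> nat \<Rightarrow> formula \<Rightarrow> bool" where
  "quasirandom k n m \<Phi> \<longleftrightarrow> (\<exists>M. is_mist k n m \<Phi> M \<and>
     real (card (Dmist k n M)) \<le> 2 ^ n * exp (- 2 * real n / (real k)\<^sup>2) \<and>
     (\<forall>\<tau>\<in>assignments n. card (M \<inter> Dball k n \<tau> 0 10) \<le> k) \<and>
     (\<forall>\<mu>\<in>M. \<forall>\<sigma>\<in>Dball k n \<mu> 0 100 - Tset k n m \<Phi>.
        real (Xcount k m \<Phi> (Delta n \<mu> \<sigma>) \<sigma>) \<le> real k * real (nUnsat k m \<Phi> \<sigma>) / 10))"

definition prob_quasirandom :: "nat \<Rightarrow> nat \<Rightarrow> nat \<Rightarrow> real" where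
  "prob_quasirandom k n m =
     real (card {\<Phi> \<in> formulas k n m. quasirandom k n m \<Phi>}) / real (card (formulas k n m))"

end

theory Submission
  imports Defs "HOL-Real_Asymp.Real_Asymp"
begin

text \<open>Three bad events are shown to be exponentially unlikely by Markov's inequality with
  exponential weights; since the clauses of \<open>\<Phi>\<close> are independent and uniform, every weighted
  count factors into an \<open>m\<close>-th power of a sum over single clauses. The events are: \<open>T(\<Phi>)\<close> is large;
  some \<open>k + 1\<close> pairwise \<open>2\<kappa>n\<close>-separated assignments of a common \<open>10\<kappa>n\<close>-ball all lie in \<open>T(\<Phi>)\<close>
  (separation makes their unsatisfied-clause events nearly independent); and some \<open>\<sigma> \<notin> T(\<Phi>)\<close>
  together with a set \<open>W\<close> of at most \<open>100\<kappa>n\<close> variables has \<open>X(W, \<sigma>) > k U(\<sigma>) / 10\<close>. Hamming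
  balls of radius \<open>x n\<close> have at most \<open>exp (n x (1 - ln x))\<close> points, so for
  \<open>m / n \<ge> 195 2\<^sup>k ln\<^sup>2 k / k\<close> all union bounds tend to \<open>0\<close>. Off the bad events, any maximal
  \<open>2\<kappa>n\<close>-separated subset of \<open>T(\<Phi>)\<close> is a mist witnessing (Q1)--(Q3).\<close>

definition literals :: "nat \<Rightarrow> (nat \<times> bool) set" where
  "literals n = {..<n} \<times> UNIV"

definition clauses :: "nat \<Rightarrow> nat \<Rightarrow> (nat \<Rightarrow> nat \<times> bool) set" where
  "clauses k n = {..<k} \<rightarrow>\<^sub>E literals n"

definition clause :: "nat \<Rightarrow> formula \<Rightarrow> nat \<Rightarrow> nat \<Rightarrow> nat \<times> bool" where
  "clause k \<Phi> i = (\<lambda>j\<in>{..<k}. \<Phi> (i, j))"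

lemma finite_literals [simp]: "finite (literals n)"
  by (simp add: literals_def)

lemma finite_clauses [simp]: "finite (clauses k n)"
  by (simp add: clauses_def finite_PiE)

lemma card_clauses: "card (clauses k n) = (2 * n) ^ k"
  by (simp add: clauses_def literals_def card_PiE card_cartesian_product)

lemma finite_formulas [simp]: "finite (formulas k n m)"
  by (simp add: formulas_def finite_PiE)

lemma card_formulas: "card (formulas k n m) = (2 * n) ^ (k * m)"
  by (simp add: formulas_def card_PiE card_cartesian_product)
     (metis mult.commute power_mult power_mult_distrib)

lemma finite_assignments [simp]: "finite (assignments n)"
  by (simp add: assignments_def finite_PiE)

lemma card_assignments: "card (assignments n) = 2 ^ n"
  by (simp add: assignments_def card_PiE)

lemma sum_literals: "(\<Sum>l\<in>literals n. f l) = (\<Sum>v<n. f (v, True) + f (v, False))"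
proof -
  have "(\<Sum>l\<in>literals n. f l) = (\<Sum>(v, b)\<in>{..<n} \<times> UNIV. f (v, b))"
    by (simp add: literals_def case_prod_beta')
  also have "\<dots> = (\<Sum>v<n. \<Sum>b\<in>UNIV. f (v, b))"
    by (simp add: sum.cartesian_product)
  finally show ?thesis by (simp add: UNIV_bool add.commute)
qed

lemma sum_clauses_prod:
  fixes \<phi> :: "nat \<times> bool \<Rightarrow> 'a::comm_semiring_1"
  shows "(\<Sum>c\<in>clauses k n. \<Prod>j<k. \<phi> (c j)) = (\<Sum>l\<in>literals n. \<phi> l) ^ k"
  using prod_sum_PiE[of "{..<k}" "\<lambda>_. literals n" "\<lambda>_ l. \<phi> l"]
  by (simp add: clauses_def)

lemma bij_betw_formulas_clause_sequences:
  "bij_betw (\<lambda>\<Phi>. \<lambda>i\<in>{..<m}. clause k \<Phi> i) (formulas k n m) ({..<m} \<rightarrow>\<^sub>E clauses k n)"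
proof (rule bij_betw_byWitness
    [where f' = "\<lambda>\<Psi> p. if p \<in> {..<m} \<times> {..<k} then \<Psi> (fst p) (snd p) else undefined"])
  show "\<forall>\<Phi>\<in>formulas k n m.
      (\<lambda>p. if p \<in> {..<m} \<times> {..<k} then (\<lambda>i\<in>{..<m}. clause k \<Phi> i) (fst p) (snd p) else undefined) = \<Phi>"
    by (auto simp: formulas_def clause_def PiE_def extensional_def fun_eq_iff)
  show "\<forall>\<Psi>\<in>{..<m} \<rightarrow>\<^sub>E clauses k n.
      (\<lambda>i\<in>{..<m}. clause k (\<lambda>p. if p \<in> {..<m} \<times> {..<k} then \<Psi> (fst p) (snd p) else undefined) i) = \<Psi>"
  proof
    fix \<Psi> assume \<Psi>: "\<Psi> \<in> {..<m} \<rightarrow>\<^sub>E clauses k n"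
    have "\<Psi> i \<in> extensional {..<k}" if "i < m" for i
      using \<Psi> that by (auto simp: clauses_def PiE_def)
    then show "(\<lambda>i\<in>{..<m}. clause k
        (\<lambda>p. if p \<in> {..<m} \<times> {..<k} then \<Psi> (fst p) (snd p) else undefined) i) = \<Psi>"
      using \<Psi> by (auto simp: clause_def fun_eq_iff extensional_def PiE_def)
  qed
  show "(\<lambda>\<Phi>. \<lambda>i\<in>{..<m}. clause k \<Phi> i) ` formulas k n m \<subseteq> {..<m} \<rightarrow>\<^sub>E clauses k n"
    by (auto simp: formulas_def clauses_def clause_def literals_def PiE_def Pi_def)
  show "(\<lambda>\<Psi> p. if p \<in> {..<m} \<times> {..<k} then \<Psi> (fst p) (snd p) else undefined)
      ` ({..<m} \<rightarrow>\<^sub>E clauses k n) \<subseteq> formulas k n m"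
    by (auto simp: formulas_def clauses_def literals_def PiE_def Pi_def extensional_def)
qed

lemma sum_formulas_prod_clauses:
  fixes g :: "(nat \<Rightarrow> nat \<times> bool) \<Rightarrow> 'a::comm_semiring_1"
  shows "(\<Sum>\<Phi>\<in>formulas k n m. \<Prod>i<m. g (clause k \<Phi> i)) = (\<Sum>c\<in>clauses k n. g c) ^ m"
proof -
  have "(\<Sum>c\<in>clauses k n. g c) ^ m = (\<Sum>\<Psi>\<in>{..<m} \<rightarrow>\<^sub>E clauses k n. \<Prod>i<m. g (\<Psi> i))"
    using prod_sum_PiE[of "{..<m}" "\<lambda>_. clauses k n" "\<lambda>_. g"] by simp
  also have "\<dots> = (\<Sum>\<Phi>\<in>formulas k n m. \<Prod>i<m. g (clause k \<Phi> i))"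
    using sum.reindex_bij_betw[OF bij_betw_formulas_clause_sequences[where m=m and k=k and n=n],
        of "\<lambda>\<Psi>. \<Prod>i<m. g (\<Psi> i)"]
    by simp
  finally show ?thesis by simp
qed

lemma card_le_clause_moment:
  fixes g :: "(nat \<Rightarrow> nat \<times> bool) \<Rightarrow> real"
  assumes "E \<subseteq> formulas k n m"
    and "\<And>\<Phi>. \<Phi> \<in> E \<Longrightarrow> 1 \<le> K * (\<Prod>i<m. g (clause k \<Phi> i))"
    and "\<And>c. 0 \<le> g c" and "0 \<le> K"
  shows "real (card E) \<le> K * (\<Sum>c\<in>clauses k n. g c) ^ m"
proof -
  have "real (card E) \<le> (\<Sum>\<Phi>\<in>E. K * (\<Prod>i<m. g (clause k \<Phi> i)))"
    using sum_mono[of E "\<lambda>_. 1::real"] assms(2) by simp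
  also have "\<dots> \<le> (\<Sum>\<Phi>\<in>formulas k n m. K * (\<Prod>i<m. g (clause k \<Phi> i)))"
    using assms by (intro sum_mono2) (auto intro!: mult_nonneg_nonneg prod_nonneg)
  also have "\<dots> = K * (\<Sum>c\<in>clauses k n. g c) ^ m"
    by (simp add: sum_distrib_left[symmetric] sum_formulas_prod_clauses)
  finally show ?thesis .
qed

definition falsifies :: "assignment \<Rightarrow> nat \<times> bool \<Rightarrow> bool" where
  "falsifies \<sigma> l \<longleftrightarrow> \<sigma> (fst l) \<noteq> snd l"

definition unsat_ind :: "nat \<Rightarrow> assignment \<Rightarrow> (nat \<Rightarrow> nat \<times> bool) \<Rightarrow> real" where
  "unsat_ind k \<sigma> c = (if \<forall>j<k. falsifies \<sigma> (c j) then 1 else 0)"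

definition hits :: "nat set \<Rightarrow> nat \<Rightarrow> (nat \<Rightarrow> nat \<times> bool) \<Rightarrow> nat" where
  "hits W k c = card {j\<in>{..<k}. fst (c j) \<in> W}"

lemma unsat_ind_cases: "unsat_ind k \<sigma> c = 0 \<or> unsat_ind k \<sigma> c = 1"
  by (simp add: unsat_ind_def)

lemma unsat_ind_eq_prod: "unsat_ind k \<sigma> c = (\<Prod>j<k. if falsifies \<sigma> (c j) then 1 else 0)"
  by (auto simp: unsat_ind_def)

lemma real_card_filter: "finite A \<Longrightarrow> real (card {x\<in>A. P x}) = (\<Sum>x\<in>A. if P x then 1 else 0)"
  using sum.inter_filter[of A "\<lambda>_. 1::real" P] by simp

lemma Unsat_eq: "Unsat k m \<Phi> \<sigma> = {i\<in>{..<m}. \<forall>j<k. falsifies \<sigma> (clause k \<Phi> i j)}"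
  by (auto simp: Unsat_def falsifies_def clause_def)

lemma nUnsat_eq_sum: "real (nUnsat k m \<Phi> \<sigma>) = (\<Sum>i<m. unsat_ind k \<sigma> (clause k \<Phi> i))"
  unfolding nUnsat_def Unsat_eq real_card_filter[OF finite_lessThan] by (simp add: unsat_ind_def)

lemma Xcount_eq_sum:
  "real (Xcount k m \<Phi> W \<sigma>) = (\<Sum>i<m. unsat_ind k \<sigma> (clause k \<Phi> i) * real (hits W k (clause k \<Phi> i)))"
proof -
  have "\<And>i. card {j \<in> {..<k}. fst (\<Phi> (i, j)) \<in> W} = hits W k (clause k \<Phi> i)"
    unfolding hits_def clause_def by (rule arg_cong[where f=card]) auto
  then have "real (Xcount k m \<Phi> W \<sigma>)
      = (\<Sum>i | i \<in> {..<m} \<and> (\<forall>j<k. falsifies \<sigma> (clause k \<Phi> i j)). real (hits W k (clause k \<Phi> i)))"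
    unfolding Xcount_def Unsat_eq by simp
  also have "\<dots> = (\<Sum>i<m. unsat_ind k \<sigma> (clause k \<Phi> i) * real (hits W k (clause k \<Phi> i)))"
    by (subst sum.inter_filter) (auto simp: unsat_ind_def intro!: sum.cong)
  finally show ?thesis .
qed

lemma sum_unsat_ind: "(\<Sum>c\<in>clauses k n. unsat_ind k \<sigma> c) = real n ^ k"
proof -
  have "(\<Sum>c\<in>clauses k n. unsat_ind k \<sigma> c)
      = (\<Sum>l\<in>literals n. (if falsifies \<sigma> l then 1 else 0::real)) ^ k"
    unfolding unsat_ind_eq_prod by (rule sum_clauses_prod)
  also have "(\<Sum>l\<in>literals n. (if falsifies \<sigma> l then 1 else 0::real)) = (\<Sum>v<n. 1)"
    unfolding sum_literals by (intro sum.cong) (auto simp: falsifies_def)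
  finally show ?thesis by simp
qed

lemma hdist_le: "hdist n \<sigma> \<tau> \<le> n"
  unfolding hdist_def using card_mono[of "{..<n}" "{v\<in>{..<n}. \<sigma> v \<noteq> \<tau> v}"] by auto

lemma hdist_sym: "hdist n \<sigma> \<tau> = hdist n \<tau> \<sigma>"
  unfolding hdist_def by (rule arg_cong[where f=card]) auto

lemma hdist_self [simp]: "hdist n \<sigma> \<sigma> = 0"
  by (simp add: hdist_def)

lemma sum_unsat_ind_both:
  "(\<Sum>c\<in>clauses k n. unsat_ind k \<sigma> c * unsat_ind k \<tau> c) = (real n - real (hdist n \<sigma> \<tau>)) ^ k"
proof -
  have "(\<Sum>c\<in>clauses k n. unsat_ind k \<sigma> c * unsat_ind k \<tau> c)
      = (\<Sum>l\<in>literals n. (if falsifies \<sigma> l \<and> falsifies \<tau> l then 1 else 0::real)) ^ k"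
    unfolding unsat_ind_eq_prod prod.distrib[symmetric]
    by (subst sum_clauses_prod[symmetric]) (auto intro!: sum.cong prod.cong)
  also have "(\<Sum>l\<in>literals n. (if falsifies \<sigma> l \<and> falsifies \<tau> l then 1 else 0::real))
      = real (card {v\<in>{..<n}. \<sigma> v = \<tau> v})"
    unfolding sum_literals real_card_filter[OF finite_lessThan]
    by (intro sum.cong) (auto simp: falsifies_def)
  also have "card {v\<in>{..<n}. \<sigma> v = \<tau> v} = n - hdist n \<sigma> \<tau>"
  proof -
    have "{v\<in>{..<n}. \<sigma> v = \<tau> v} = {..<n} - {v\<in>{..<n}. \<sigma> v \<noteq> \<tau> v}" by auto
    moreover have "{v\<in>{..<n}. \<sigma> v \<noteq> \<tau> v} \<subseteq> {..<n}" by auto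
    ultimately show ?thesis
      unfolding hdist_def using card_Diff_subset[OF finite_subset] by (metis card_lessThan finite_lessThan)
  qed
  finally show ?thesis using hdist_le[of n \<sigma> \<tau>] by (simp add: of_nat_diff)
qed

lemma sum_unsat_ind_exp_hits:
  assumes "W \<subseteq> {..<n}"
  shows "(\<Sum>c\<in>clauses k n. unsat_ind k \<sigma> c * exp (real (hits W k c)))
    = (real n + real (card W) * (exp 1 - 1)) ^ k"
proof -
  have "unsat_ind k \<sigma> c * exp (real (hits W k c))
      = (\<Prod>j<k. if falsifies \<sigma> (c j) then exp (if fst (c j) \<in> W then 1 else 0) else 0)" for c
  proof -
    have "exp (real (hits W k c)) = (\<Prod>j<k. exp (if fst (c j) \<in> W then 1 else 0))"
      unfolding hits_def real_card_filter[OF finite_lessThan] by (simp add: exp_sum)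
    then have "unsat_ind k \<sigma> c * exp (real (hits W k c))
        = (\<Prod>j<k. (if falsifies \<sigma> (c j) then 1 else 0) * exp (if fst (c j) \<in> W then 1 else 0))"
      by (simp add: unsat_ind_eq_prod prod.distrib)
    then show ?thesis by (auto intro!: prod.cong)
  qed
  then have "(\<Sum>c\<in>clauses k n. unsat_ind k \<sigma> c * exp (real (hits W k c)))
      = (\<Sum>l\<in>literals n. if falsifies \<sigma> l then exp (if fst l \<in> W then 1 else 0) else 0) ^ k"
    using sum_clauses_prod[of "\<lambda>l. if falsifies \<sigma> l then exp (if fst l \<in> W then 1 else 0) else 0"]
    by simp
  also have "(\<Sum>l\<in>literals n. if falsifies \<sigma> l then exp (if fst l \<in> W then 1 else 0) else 0)
      = (\<Sum>v<n. 1 + (if v \<in> W then exp 1 - 1 else 0))"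
    unfolding sum_literals by (intro sum.cong) (auto simp: falsifies_def)
  also have "\<dots> = real n + real (card W) * (exp 1 - 1)"
    using assms by (simp add: sum.distrib sum.If_cases Int_absorb1)
  finally show ?thesis .
qed

definition separated :: "nat \<Rightarrow> nat \<Rightarrow> assignment set \<Rightarrow> bool" where
  "separated k n S \<longleftrightarrow> (\<forall>\<mu>\<in>S. \<forall>\<nu>\<in>S. \<mu> \<noteq> \<nu> \<longrightarrow> 2 * kappa k * real n \<le> real (hdist n \<mu> \<nu>))"

lemma exp_minus_le_quadratic:
  fixes x :: real
  assumes "0 \<le> x"
  shows "exp (- x) \<le> 1 - x + x\<^sup>2 / 2"
proof -
  let ?g = "\<lambda>y::real. exp (- y) - (1 - y + y\<^sup>2 / 2)"
  have "?g x \<le> ?g 0"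
  proof (rule deriv_nonpos_imp_antimono[where g = ?g and a = 0 and b = x
        and g' = "\<lambda>y. - exp (- y) + 1 - y"])
    fix y assume "y \<in> {0..x}"
    show "(?g has_real_derivative (- exp (- y) + 1 - y)) (at y)"
      by (auto intro!: derivative_eq_intros simp: power2_eq_square algebra_simps)
    show "- exp (- y) + 1 - y \<le> 0"
      using exp_ge_add_one_self[of "- y"] by simp
  qed (use assms in auto)
  then show ?thesis by simp
qed

lemma exp_kappa_power: "k \<ge> 1 \<Longrightarrow> exp (c * kappa k) ^ k = real k powr c"
  by (simp add: exp_of_nat_mult[symmetric] kappa_def powr_def)

lemma power_diff_le_if_separated:
  assumes "k \<ge> 1" "2 * kappa k \<le> 1" "2 * kappa k * real n \<le> real d" "d \<le> n"
  shows "(real n - real d) ^ k \<le> real n ^ k / real k ^ 2"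
proof -
  have "(real n - real d) ^ k \<le> (real n * (1 - 2 * kappa k)) ^ k"
    using assms by (intro power_mono) (auto simp: algebra_simps)
  also have "\<dots> \<le> (real n * exp (- 2 * kappa k)) ^ k"
    using assms exp_ge_add_one_self[of "- 2 * kappa k"] by (intro power_mono mult_left_mono) auto
  also have "\<dots> = real n ^ k / real k ^ 2"
    using exp_kappa_power[of k "-2"] assms(1)
    by (simp add: power_mult_distrib powr_minus powr_numeral divide_inverse)
  finally show ?thesis .
qed

text \<open>Pairwise separation keeps the second moment of the number of assignments in \<open>S\<close>
  violating a random clause close to its first moment.\<close>

lemma sum_unsat_overlaps_le:
  assumes "k \<ge> 1" "2 * kappa k \<le> 1" "finite S" "card S \<le> k + 1" "separated k n S" "\<sigma> \<in> S"
  shows "(\<Sum>\<tau>\<in>S. \<Sum>c\<in>clauses k n. unsat_ind k \<sigma> c * unsat_ind k \<tau> c) \<le> 2 * real n ^ k"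
proof -
  have other: "(\<Sum>c\<in>clauses k n. unsat_ind k \<sigma> c * unsat_ind k \<tau> c) \<le> real n ^ k / real k ^ 2"
    if "\<tau> \<in> S - {\<sigma>}" for \<tau>
    unfolding sum_unsat_ind_both using assms that hdist_le
    by (intro power_diff_le_if_separated) (auto simp: separated_def)
  have "(\<Sum>\<tau>\<in>S. \<Sum>c\<in>clauses k n. unsat_ind k \<sigma> c * unsat_ind k \<tau> c)
      = real n ^ k + (\<Sum>\<tau>\<in>S - {\<sigma>}. \<Sum>c\<in>clauses k n. unsat_ind k \<sigma> c * unsat_ind k \<tau> c)"
    using assms by (simp add: sum.remove sum_unsat_ind_both)
  also have "\<dots> \<le> real n ^ k + (\<Sum>\<tau>\<in>S - {\<sigma>}. real n ^ k / real k ^ 2)"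
    using other by (intro add_left_mono sum_mono)
  also have "\<dots> = real n ^ k + real (card S - 1) * (real n ^ k / real k ^ 2)"
    using assms by simp
  also have "\<dots> \<le> real n ^ k + real k * (real n ^ k / real k ^ 2)"
    using assms by (intro add_left_mono mult_right_mono) auto
  also have "\<dots> \<le> 2 * real n ^ k"
    using assms mult_left_mono[of 1 "real k" "real n ^ k"] by (simp add: power2_eq_square field_simps)
  finally show ?thesis .
qed

lemma sum_clauses_exp_unsat_le:
  assumes "k \<ge> 1" "2 * kappa k \<le> 1" "finite S" "card S \<le> k + 1" "separated k n S"
  shows "(\<Sum>c\<in>clauses k n. exp (- (\<Sum>\<sigma>\<in>S. unsat_ind k \<sigma> c) / 2))
    \<le> real (2 * n) ^ k * exp (- real (card S) / (4 * 2 ^ k))"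
proof -
  define N where "N c = (\<Sum>\<sigma>\<in>S. unsat_ind k \<sigma> c)" for c
  define s where "s = real (card S)"
  have "(\<Sum>c\<in>clauses k n. exp (- N c / 2)) \<le> (\<Sum>c\<in>clauses k n. 1 - N c / 2 + N c ^ 2 / 8)"
  proof (rule sum_mono)
    fix c
    have "0 \<le> N c" by (simp add: N_def sum_nonneg unsat_ind_def)
    then show "exp (- N c / 2) \<le> 1 - N c / 2 + N c ^ 2 / 8"
      using exp_minus_le_quadratic[of "N c / 2"] by (simp add: power_divide)
  qed
  also have "\<dots> = real (card (clauses k n)) - (\<Sum>c\<in>clauses k n. N c) / 2
      + (\<Sum>c\<in>clauses k n. N c ^ 2) / 8"
    by (simp add: sum.distrib sum_subtractf sum_divide_distrib)
  also have "(\<Sum>c\<in>clauses k n. N c) = s * real n ^ k"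
    unfolding N_def by (subst sum.swap) (simp add: sum_unsat_ind s_def)
  also have "(\<Sum>c\<in>clauses k n. N c ^ 2) \<le> s * (2 * real n ^ k)"
  proof -
    have "(\<Sum>c\<in>clauses k n. N c ^ 2)
        = (\<Sum>\<sigma>\<in>S. \<Sum>\<tau>\<in>S. \<Sum>c\<in>clauses k n. unsat_ind k \<sigma> c * unsat_ind k \<tau> c)"
      by (simp add: N_def power2_eq_square sum_product sum.swap[of _ "clauses k n"])
    also have "\<dots> \<le> (\<Sum>\<sigma>\<in>S. 2 * real n ^ k)"
      using assms by (intro sum_mono sum_unsat_overlaps_le)
    finally show ?thesis by (simp add: s_def)
  qed
  also have "real (card (clauses k n)) - s * real n ^ k / 2 + s * (2 * real n ^ k) / 8
      = real (2 * n) ^ k * (1 - s / (4 * 2 ^ k))"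
    by (simp add: card_clauses power_mult_distrib field_simps)
  also have "\<dots> \<le> real (2 * n) ^ k * exp (- s / (4 * 2 ^ k))"
    using exp_ge_add_one_self[of "- s / (4 * 2 ^ k)"] by (intro mult_left_mono) auto
  finally show ?thesis by (simp add: N_def s_def)
qed

lemma nUnsat_le_if_in_Tset:
  "n > 0 \<Longrightarrow> \<sigma> \<in> Tset k n m \<Phi> \<Longrightarrow> real (nUnsat k m \<Phi> \<sigma>) \<le> real m / 2 ^ k / 10"
  by (simp add: Tset_def rho_def)

lemma card_formulas_Tset_superset_le:
  assumes "n > 0" "k \<ge> 1" "2 * kappa k \<le> 1" "finite S" "card S \<le> k + 1" "separated k n S"
  shows "real (card {\<Phi>\<in>formulas k n m. S \<subseteq> Tset k n m \<Phi>})
    \<le> real (2 * n) ^ (k * m) * exp (- real (card S) * (real m / 2 ^ k) / 5)"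
proof -
  define s where "s = real (card S)"
  define A where "A = real m / 2 ^ k"
  define g where "g c = exp (- (\<Sum>\<sigma>\<in>S. unsat_ind k \<sigma> c) / 2)" for c
  have "real (card {\<Phi>\<in>formulas k n m. S \<subseteq> Tset k n m \<Phi>}) \<le> exp (s * A / 20) * (\<Sum>c\<in>clauses k n. g c) ^ m"
  proof (rule card_le_clause_moment)
    fix \<Phi> assume "\<Phi> \<in> {\<Phi>\<in>formulas k n m. S \<subseteq> Tset k n m \<Phi>}"
    then have "(\<Sum>\<sigma>\<in>S. real (nUnsat k m \<Phi> \<sigma>)) \<le> (\<Sum>\<sigma>\<in>S. A / 10)"
      using nUnsat_le_if_in_Tset[OF assms(1)] by (intro sum_mono) (auto simp: A_def)
    moreover have "(\<Prod>i<m. g (clause k \<Phi> i)) = exp (\<Sum>i<m. - (\<Sum>\<sigma>\<in>S. unsat_ind k \<sigma> (clause k \<Phi> i)) / 2)"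
      by (simp add: g_def exp_sum)
    moreover have "(\<Sum>i<m. - (\<Sum>\<sigma>\<in>S. unsat_ind k \<sigma> (clause k \<Phi> i)) / 2)
        = - (\<Sum>\<sigma>\<in>S. real (nUnsat k m \<Phi> \<sigma>)) / 2"
      by (simp add: nUnsat_eq_sum sum.swap[of _ "{..<m}"] sum_divide_distrib sum_negf)
    ultimately show "1 \<le> exp (s * A / 20) * (\<Prod>i<m. g (clause k \<Phi> i))"
      by (simp add: s_def exp_add[symmetric])
  qed (auto simp: g_def)
  also have "\<dots> \<le> exp (s * A / 20) * (real (2 * n) ^ k * exp (- s / (4 * 2 ^ k))) ^ m"
    using sum_clauses_exp_unsat_le[OF assms(2-6)]
    by (intro mult_left_mono power_mono) (auto simp: g_def s_def intro: sum_nonneg)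
  also have "\<dots> = real (2 * n) ^ (k * m) * exp (- s * A / 5)"
    by (simp add: power_mult_distrib power_mult exp_of_nat_mult[symmetric] exp_add[symmetric]
        A_def field_simps)
  finally show ?thesis by (simp add: s_def A_def)
qed

lemma sum_clauses_exp_hits_le:
  assumes "k \<ge> 1" "W \<subseteq> {..<n}" "real (card W) \<le> 100 * kappa k * real n"
    and "exp (- real k / 20) * real k ^ 200 \<le> 1 / 2"
  shows "(\<Sum>c\<in>clauses k n. exp (unsat_ind k \<sigma> c * (real (hits W k c) - real k / 20)))
    \<le> real (2 * n) ^ k"
proof -
  have "exp (unsat_ind k \<sigma> c * (real (hits W k c) - real k / 20))
      = 1 - unsat_ind k \<sigma> c + exp (- real k / 20) * (unsat_ind k \<sigma> c * exp (real (hits W k c)))" for c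
    using unsat_ind_cases[of k \<sigma> c] by (auto simp: mult_exp_exp)
  then have "(\<Sum>c\<in>clauses k n. exp (unsat_ind k \<sigma> c * (real (hits W k c) - real k / 20)))
      = real (2 * n) ^ k - real n ^ k + exp (- real k / 20) * (real n + real (card W) * (exp 1 - 1)) ^ k"
    using assms(2)
    by (simp add: sum.distrib sum_subtractf sum_distrib_left[symmetric] card_clauses sum_unsat_ind
        sum_unsat_ind_exp_hits)
  also have "(real n + real (card W) * (exp 1 - 1)) ^ k \<le> (real n * exp (200 * kappa k)) ^ k"
  proof (rule power_mono)
    have "real (card W) * (exp 1 - 1) \<le> 100 * kappa k * real n * 2"
      using assms(3) exp_le by (intro mult_mono) auto
    moreover have "real n * (1 + 200 * kappa k) \<le> real n * exp (200 * kappa k)"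
      using exp_ge_add_one_self[of "200 * kappa k"] by (intro mult_left_mono) auto
    ultimately show "real n + real (card W) * (exp 1 - 1) \<le> real n * exp (200 * kappa k)"
      by (simp add: algebra_simps)
  qed simp
  also have "(real n * exp (200 * kappa k)) ^ k = real n ^ k * real k ^ 200"
    using exp_kappa_power[of k 200] assms(1) by (simp add: power_mult_distrib powr_realpow)
  finally have "(\<Sum>c\<in>clauses k n. exp (unsat_ind k \<sigma> c * (real (hits W k c) - real k / 20)))
      \<le> real (2 * n) ^ k - real n ^ k + real n ^ k * (exp (- real k / 20) * real k ^ 200)"
    by (simp add: mult_left_mono mult.left_commute)
  also have "\<dots> \<le> real (2 * n) ^ k"
  proof -
    have "real n ^ k * (exp (- real k / 20) * real k ^ 200) \<le> real n ^ k * (1 / 2)"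
      by (rule mult_left_mono[OF assms(4)]) simp
    moreover have "0 \<le> real n ^ k" by simp
    ultimately show ?thesis by linarith
  qed
  finally show ?thesis .
qed

lemma card_formulas_Xcount_large_le:
  assumes "k \<ge> 1" "W \<subseteq> {..<n}" "real (card W) \<le> 100 * kappa k * real n"
    and "exp (- real k / 20) * real k ^ 200 \<le> 1 / 2"
  shows "real (card {\<Phi>\<in>formulas k n m. real m / 2 ^ k / 10 < real (nUnsat k m \<Phi> \<sigma>) \<and>
      real k * real (nUnsat k m \<Phi> \<sigma>) / 10 < real (Xcount k m \<Phi> W \<sigma>)})
    \<le> real (2 * n) ^ (k * m) * exp (- real k * (real m / 2 ^ k) / 200)"
proof -
  define A where "A = real m / 2 ^ k"
  define g where "g c = exp (unsat_ind k \<sigma> c * (real (hits W k c) - real k / 20))" for c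
  have "real (card {\<Phi>\<in>formulas k n m. real m / 2 ^ k / 10 < real (nUnsat k m \<Phi> \<sigma>) \<and>
      real k * real (nUnsat k m \<Phi> \<sigma>) / 10 < real (Xcount k m \<Phi> W \<sigma>)})
    \<le> exp (- real k * A / 200) * (\<Sum>c\<in>clauses k n. g c) ^ m"
  proof (rule card_le_clause_moment)
    fix \<Phi> assume \<Phi>: "\<Phi> \<in> {\<Phi>\<in>formulas k n m. real m / 2 ^ k / 10 < real (nUnsat k m \<Phi> \<sigma>) \<and>
      real k * real (nUnsat k m \<Phi> \<sigma>) / 10 < real (Xcount k m \<Phi> W \<sigma>)}"
    have "(\<Prod>i<m. g (clause k \<Phi> i))
        = exp (\<Sum>i<m. unsat_ind k \<sigma> (clause k \<Phi> i) * (real (hits W k (clause k \<Phi> i)) - real k / 20))"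
      by (simp add: g_def exp_sum)
    also have "(\<Sum>i<m. unsat_ind k \<sigma> (clause k \<Phi> i) * (real (hits W k (clause k \<Phi> i)) - real k / 20))
        = real (Xcount k m \<Phi> W \<sigma>) - real k / 20 * real (nUnsat k m \<Phi> \<sigma>)"
      by (simp add: Xcount_eq_sum nUnsat_eq_sum right_diff_distrib sum_subtractf sum_distrib_left
          mult.commute)
    finally have "(\<Prod>i<m. g (clause k \<Phi> i))
        = exp (real (Xcount k m \<Phi> W \<sigma>) - real k / 20 * real (nUnsat k m \<Phi> \<sigma>))" .
    moreover have "real k * A / 200 \<le> real (Xcount k m \<Phi> W \<sigma>) - real k / 20 * real (nUnsat k m \<Phi> \<sigma>)"
      using \<Phi> mult_left_mono[of "A / 10" "real (nUnsat k m \<Phi> \<sigma>)" "real k / 20"]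
      by (simp add: A_def)
    ultimately show "1 \<le> exp (- real k * A / 200) * (\<Prod>i<m. g (clause k \<Phi> i))"
      by (simp add: mult_exp_exp)
  qed (auto simp: g_def)
  also have "\<dots> \<le> exp (- real k * A / 200) * real (2 * n) ^ (k * m)"
    using sum_clauses_exp_hits_le[OF assms, of \<sigma>]
    by (intro mult_left_mono) (auto simp: g_def power_mult intro!: power_mono sum_nonneg)
  finally show ?thesis by (simp add: A_def mult.commute)
qed

lemma sum_Pow_power_card:
  fixes x :: "'a::comm_semiring_1"
  assumes "finite A"
  shows "(\<Sum>W\<in>Pow A. x ^ card W) = (1 + x) ^ card A"
  using prod_add[OF assms, of "\<lambda>_. x" "\<lambda>_. 1"] by (simp add: add.commute)

lemma card_subsets_le:
  fixes x R :: real
  assumes "0 < x" "x \<le> 1"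
  shows "real (card {W\<in>Pow {..<n}. real (card W) \<le> R}) \<le> exp (- R * ln x + x * real n)"
proof -
  have "real (card {W\<in>Pow {..<n}. real (card W) \<le> R})
      = (\<Sum>W\<in>Pow {..<n}. if real (card W) \<le> R then 1 else 0)"
    by (rule real_card_filter) auto
  also have "\<dots> \<le> (\<Sum>W\<in>Pow {..<n}. x ^ card W * exp (- R * ln x))"
  proof (rule sum_mono)
    fix W :: "nat set"
    have "x ^ card W = exp (real (card W) * ln x)"
      using assms by (simp add: exp_of_nat_mult)
    then have "x ^ card W * exp (- R * ln x) = exp ((real (card W) - R) * ln x)"
      by (simp add: mult_exp_exp algebra_simps)
    moreover have "real (card W) \<le> R \<Longrightarrow> 0 \<le> (real (card W) - R) * ln x"
      using assms by (intro mult_nonpos_nonpos) auto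
    ultimately show "(if real (card W) \<le> R then 1 else 0) \<le> x ^ card W * exp (- R * ln x)"
      by auto
  qed
  also have "\<dots> = exp (- R * ln x) * (1 + x) ^ n"
    by (simp add: sum_distrib_right[symmetric] sum_Pow_power_card mult.commute)
  also have "\<dots> \<le> exp (- R * ln x) * exp x ^ n"
    using assms by (intro mult_left_mono power_mono) (auto simp: add.commute)
  also have "\<dots> = exp (- R * ln x + x * real n)"
    by (simp add: mult_exp_exp exp_of_nat_mult[symmetric] mult.commute)
  finally show ?thesis .
qed

definition ball_rate :: "real \<Rightarrow> real" where
  "ball_rate x = x * (1 - ln x)"

lemma card_subsets_le_ball_rate:
  assumes "0 < r * kappa k" "r * kappa k \<le> 1"
  shows "real (card {W\<in>Pow {..<n}. real (card W) \<le> r * kappa k * real n})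
    \<le> exp (real n * ball_rate (r * kappa k))"
  using card_subsets_le[OF assms, of n "r * kappa k * real n"]
  by (simp add: ball_rate_def algebra_simps)

lemma card_Delta: "card (Delta n \<sigma> \<tau>) = hdist n \<sigma> \<tau>"
  by (simp add: Delta_def hdist_def)

lemma inj_on_Delta: "inj_on (Delta n \<sigma>) (assignments n)"
proof (rule inj_onI)
  fix \<tau> \<tau>' assume \<tau>: "\<tau> \<in> assignments n" "\<tau>' \<in> assignments n" "Delta n \<sigma> \<tau> = Delta n \<sigma> \<tau>'"
  show "\<tau> = \<tau>'"
  proof
    fix v
    show "\<tau> v = \<tau>' v"
    proof (cases "v < n")
      case True
      then show ?thesis using \<tau>(3) by (auto simp: Delta_def set_eq_iff)
    next
      case False
      then show ?thesis using \<tau>(1,2) by (auto simp: assignments_def PiE_def extensional_def)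
    qed
  qed
qed

lemma finite_Dball [simp]: "finite (Dball k n \<sigma> r1 r2)"
  by (rule finite_subset[of _ "assignments n"]) (auto simp: Dball_def)

lemma Dball_0_iff:
  "\<tau> \<in> Dball k n \<sigma> 0 r \<longleftrightarrow> \<tau> \<in> assignments n \<and> real (hdist n \<sigma> \<tau>) \<le> r * kappa k * real n"
  by (simp add: Dball_def le_floor_iff)

lemma card_Dball_le:
  assumes "0 < r * kappa k" "r * kappa k \<le> 1"
  shows "real (card (Dball k n \<sigma> 0 r)) \<le> exp (real n * ball_rate (r * kappa k))"
proof -
  have "card (Dball k n \<sigma> 0 r) \<le> card {W\<in>Pow {..<n}. real (card W) \<le> r * kappa k * real n}"
  proof (rule card_inj_on_le)
    show "inj_on (Delta n \<sigma>) (Dball k n \<sigma> 0 r)"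
      using inj_on_Delta by (rule inj_on_subset) (auto simp: Dball_def)
    show "Delta n \<sigma> ` Dball k n \<sigma> 0 r \<subseteq> {W\<in>Pow {..<n}. real (card W) \<le> r * kappa k * real n}"
      by (auto simp: Dball_0_iff card_Delta) (auto simp: Delta_def)
  qed simp
  then show ?thesis
    using card_subsets_le_ball_rate[OF assms, of n] by linarith
qed

lemma finite_Tset: "finite (Tset k n m \<Phi>)"
  by (rule finite_subset[of _ "assignments n"]) (auto simp: Tset_def)

lemma ex_mist:
  assumes "0 \<le> kappa k"
  shows "\<exists>M. is_mist k n m \<Phi> M"
proof -
  define F where "F = {M. M \<subseteq> Tset k n m \<Phi> \<and> separated k n M}"
  have "finite F"
    unfolding F_def by (rule finite_subset[of _ "Pow (Tset k n m \<Phi>)"]) (auto simp: finite_Tset)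
  moreover have "card ` F \<noteq> {}" by (auto simp: F_def separated_def)
  ultimately obtain M where "M \<in> F" "card M = Max (card ` F)"
    using Max_in[OF finite_imageI] by (metis imageE)
  with \<open>finite F\<close> have "M \<in> F" and M_max: "\<And>M'. M' \<in> F \<Longrightarrow> card M' \<le> card M"
    by auto
  then have MT: "M \<subseteq> Tset k n m \<Phi>" and sep: "separated k n M" by (auto simp: F_def)
  have "finite M"
    using MT finite_Tset by (rule finite_subset)
  have "\<exists>\<mu>\<in>M. real (hdist n \<mu> \<sigma>) \<le> 2 * kappa k * real n" if \<sigma>: "\<sigma> \<in> Tset k n m \<Phi>" for \<sigma>
  proof (rule ccontr)
    assume far: "\<not> ?thesis"
    then have "\<sigma> \<notin> M" using assms by force
    have "separated k n (insert \<sigma> M)"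
      using sep far unfolding separated_def
      by (metis hdist_sym insert_iff less_imp_le not_le)
    then have "insert \<sigma> M \<in> F" using MT \<sigma> by (simp add: F_def)
    then show False using M_max[of "insert \<sigma> M"] \<open>\<sigma> \<notin> M\<close> \<open>finite M\<close> by simp
  qed
  then have "is_mist k n m \<Phi> M"
    using MT sep by (auto simp: is_mist_def separated_def)
  then show ?thesis ..
qed

definition bad_Tset :: "nat \<Rightarrow> nat \<Rightarrow> nat \<Rightarrow> formula set" where
  "bad_Tset k n m =
     {\<Phi>\<in>formulas k n m. 2 ^ n * exp (- (real m / 2 ^ k) / 10) < real (card (Tset k n m \<Phi>))}"

definition separated_near :: "nat \<Rightarrow> nat \<Rightarrow> assignment \<Rightarrow> assignment set set" where
  "separated_near k n \<tau> = {S. S \<subseteq> Dball k n \<tau> 0 10 \<and> card S = k + 1 \<and> separated k n S}"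

definition bad_crowded :: "nat \<Rightarrow> nat \<Rightarrow> nat \<Rightarrow> formula set" where
  "bad_crowded k n m = (\<Union>\<tau>\<in>assignments n. \<Union>S\<in>separated_near k n \<tau>.
     {\<Phi>\<in>formulas k n m. S \<subseteq> Tset k n m \<Phi>})"

definition bad_Xcount_at :: "nat \<Rightarrow> nat \<Rightarrow> nat \<Rightarrow> assignment \<Rightarrow> nat set \<Rightarrow> formula set" where
  "bad_Xcount_at k n m \<sigma> W = {\<Phi>\<in>formulas k n m. real m / 2 ^ k / 10 < real (nUnsat k m \<Phi> \<sigma>) \<and>
     real k * real (nUnsat k m \<Phi> \<sigma>) / 10 < real (Xcount k m \<Phi> W \<sigma>)}"

definition bad_Xcount :: "nat \<Rightarrow> nat \<Rightarrow> nat \<Rightarrow> formula set" where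
  "bad_Xcount k n m = (\<Union>\<sigma>\<in>assignments n.
     \<Union>W\<in>{W\<in>Pow {..<n}. real (card W) \<le> 100 * kappa k * real n}. bad_Xcount_at k n m \<sigma> W)"

lemma real_card_UN_le:
  "finite I \<Longrightarrow> real (card (\<Union>i\<in>I. A i)) \<le> (\<Sum>i\<in>I. real (card (A i)))"
  using of_nat_mono[OF card_UN_le] by simp

lemma card_Dmist_le:
  assumes "finite M" "\<And>\<sigma>. real (card (Dball k n \<sigma> 0 10)) \<le> V"
  shows "real (card (Dmist k n M)) \<le> real (card M) * V"
proof -
  have "real (card (Dmist k n M)) \<le> (\<Sum>\<sigma>\<in>M. real (card (Dball k n \<sigma> 0 10)))"
    unfolding Dmist_def by (rule real_card_UN_le[OF assms(1)])
  also have "\<dots> \<le> real (card M) * V"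
    using sum_mono[of M _ "\<lambda>_. V", OF assms(2)] by simp
  finally show ?thesis .
qed

lemma card_inter_Dball_le_if_not_bad_crowded:
  assumes "M \<subseteq> Tset k n m \<Phi>" "separated k n M" "\<Phi> \<notin> bad_crowded k n m"
    and "\<Phi> \<in> formulas k n m" "\<tau> \<in> assignments n"
  shows "card (M \<inter> Dball k n \<tau> 0 10) \<le> k"
proof (rule ccontr)
  assume "\<not> ?thesis"
  then have "k + 1 \<le> card (M \<inter> Dball k n \<tau> 0 10)" by simp
  then obtain S where S: "S \<subseteq> M \<inter> Dball k n \<tau> 0 10" "card S = k + 1"
    by (rule obtain_subset_with_card_n)
  then have "S \<in> separated_near k n \<tau>"
    using assms(2) by (auto simp: separated_near_def separated_def)
  then have "\<Phi> \<in> bad_crowded k n m"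
    using S assms(1,4,5) unfolding bad_crowded_def by blast
  then show False using assms(3) by simp
qed

lemma Xcount_le_if_not_bad_Xcount:
  assumes "n > 0" "\<Phi> \<in> formulas k n m" "\<Phi> \<notin> bad_Xcount k n m"
    and "\<sigma> \<in> Dball k n \<mu> 0 100 - Tset k n m \<Phi>"
  shows "real (Xcount k m \<Phi> (Delta n \<mu> \<sigma>) \<sigma>) \<le> real k * real (nUnsat k m \<Phi> \<sigma>) / 10"
proof (rule ccontr)
  assume "\<not> ?thesis"
  moreover have "\<sigma> \<in> assignments n" "real (card (Delta n \<mu> \<sigma>)) \<le> 100 * kappa k * real n"
    using assms(4) by (auto simp: Dball_0_iff card_Delta)
  moreover have "real m / 2 ^ k / 10 < real (nUnsat k m \<Phi> \<sigma>)"
    using assms(1,4) \<open>\<sigma> \<in> assignments n\<close> by (auto simp: Tset_def rho_def)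
  ultimately have "\<Phi> \<in> bad_Xcount_at k n m \<sigma> (Delta n \<mu> \<sigma>)"
    and "Delta n \<mu> \<sigma> \<in> {W\<in>Pow {..<n}. real (card W) \<le> 100 * kappa k * real n}"
    using assms(2) by (auto simp: bad_Xcount_at_def Delta_def)
  then have "\<Phi> \<in> bad_Xcount k n m"
    unfolding bad_Xcount_def using \<open>\<sigma> \<in> assignments n\<close> by blast
  then show False using assms(3) by simp
qed

lemma quasirandom_if_not_bad:
  assumes "n > 0" "0 \<le> kappa k" "\<Phi> \<in> formulas k n m"
    and "\<Phi> \<notin> bad_Tset k n m" "\<Phi> \<notin> bad_crowded k n m" "\<Phi> \<notin> bad_Xcount k n m"
    and V: "\<And>\<sigma>. real (card (Dball k n \<sigma> 0 10)) \<le> V"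
    and "2 ^ n * exp (- (real m / 2 ^ k) / 10) * V \<le> 2 ^ n * exp (- 2 * real n / (real k)\<^sup>2)"
  shows "quasirandom k n m \<Phi>"
proof -
  obtain M where M: "is_mist k n m \<Phi> M" using ex_mist[OF assms(2)] by blast
  then have MT: "M \<subseteq> Tset k n m \<Phi>" and sep: "separated k n M"
    by (auto simp: is_mist_def separated_def)
  have "finite M" using MT finite_Tset by (rule finite_subset)
  have "0 \<le> V" using V[of undefined] by (rule order_trans[rotated]) simp
  have "real (card (Dmist k n M)) \<le> real (card M) * V"
    using \<open>finite M\<close> V by (rule card_Dmist_le)
  also have "\<dots> \<le> real (card (Tset k n m \<Phi>)) * V"
    using card_mono[OF finite_Tset MT] \<open>0 \<le> V\<close> by (simp add: mult_right_mono)
  also have "\<dots> \<le> 2 ^ n * exp (- (real m / 2 ^ k) / 10) * V"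
    using assms(3,4) \<open>0 \<le> V\<close> by (intro mult_right_mono) (auto simp: bad_Tset_def not_less)
  finally have "real (card (Dmist k n M)) \<le> 2 ^ n * exp (- 2 * real n / (real k)\<^sup>2)"
    using assms(8) by linarith
  moreover note card_inter_Dball_le_if_not_bad_crowded[OF MT sep assms(5,3)]
  moreover note Xcount_le_if_not_bad_Xcount[OF assms(1,3,6)]
  ultimately show ?thesis
    using M unfolding quasirandom_def by blast
qed

lemma card_bad_Tset_le:
  assumes "n > 0" "k \<ge> 1" "2 * kappa k \<le> 1"
  shows "real (card (bad_Tset k n m)) \<le> real (2 * n) ^ (k * m) * exp (- (real m / 2 ^ k) / 10)"
proof -
  define c where "c = 2 ^ n * exp (- (real m / 2 ^ k) / 10)"
  have single: "real (card {\<Phi>\<in>formulas k n m. \<sigma> \<in> Tset k n m \<Phi>})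
      \<le> real (2 * n) ^ (k * m) * exp (- (real m / 2 ^ k) / 5)" for \<sigma>
    using card_formulas_Tset_superset_le[OF assms, of "{\<sigma>}" m]
    by (simp add: separated_def)
  have "real (card (bad_Tset k n m)) * c = (\<Sum>\<Phi>\<in>bad_Tset k n m. c)"
    by simp
  also have "\<dots> \<le> (\<Sum>\<Phi>\<in>bad_Tset k n m. real (card (Tset k n m \<Phi>)))"
    by (rule sum_mono) (simp add: bad_Tset_def c_def)
  also have "\<dots> \<le> (\<Sum>\<Phi>\<in>formulas k n m. real (card (Tset k n m \<Phi>)))"
    by (rule sum_mono2) (auto simp: bad_Tset_def)
  also have "\<dots> = (\<Sum>\<Phi>\<in>formulas k n m. \<Sum>\<sigma>\<in>assignments n. if \<sigma> \<in> Tset k n m \<Phi> then 1 else 0)"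
  proof (rule sum.cong[OF refl])
    fix \<Phi>
    have "Tset k n m \<Phi> = {\<sigma>\<in>assignments n. \<sigma> \<in> Tset k n m \<Phi>}" by (auto simp: Tset_def)
    then show "real (card (Tset k n m \<Phi>))
        = (\<Sum>\<sigma>\<in>assignments n. if \<sigma> \<in> Tset k n m \<Phi> then 1 else 0)"
      by (metis finite_assignments real_card_filter)
  qed
  also have "\<dots> = (\<Sum>\<sigma>\<in>assignments n. real (card {\<Phi>\<in>formulas k n m. \<sigma> \<in> Tset k n m \<Phi>}))"
    by (subst sum.swap) (simp only: real_card_filter[OF finite_formulas])
  also have "\<dots> \<le> (\<Sum>\<sigma>\<in>assignments n. real (2 * n) ^ (k * m) * exp (- (real m / 2 ^ k) / 5))"
    by (rule sum_mono) (rule single)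
  also have "\<dots> = 2 ^ n * (real (2 * n) ^ (k * m) * exp (- (real m / 2 ^ k) / 5))"
    by (simp add: card_assignments)
  also have "\<dots> = real (2 * n) ^ (k * m) * exp (- (real m / 2 ^ k) / 10) * c"
    by (simp add: c_def mult_exp_exp)
  finally show ?thesis by (simp add: c_def)
qed

lemma card_separated_near_le:
  "real (card (separated_near k n \<tau>)) \<le> real (card (Dball k n \<tau> 0 10)) ^ (k + 1)"
proof -
  have "card (separated_near k n \<tau>) \<le> card {S. S \<subseteq> Dball k n \<tau> 0 10 \<and> card S = k + 1}"
    by (rule card_mono) (auto simp: separated_near_def)
  also have "\<dots> = card (Dball k n \<tau> 0 10) choose (k + 1)"
    by (simp add: n_subsets)
  also have "\<dots> \<le> card (Dball k n \<tau> 0 10) ^ (k + 1)"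
    by (metis binomial_eq_0 binomial_le_pow not_le zero_le)
  finally show ?thesis by (metis of_nat_le_iff of_nat_power)
qed

lemma card_bad_crowded_le:
  assumes "n > 0" "k \<ge> 1" "2 * kappa k \<le> 1" "\<And>\<sigma>. real (card (Dball k n \<sigma> 0 10)) \<le> V"
  shows "real (card (bad_crowded k n m))
    \<le> 2 ^ n * V ^ (k + 1) * (real (2 * n) ^ (k * m) * exp (- real (k + 1) * (real m / 2 ^ k) / 5))"
proof -
  define Q where "Q = real (2 * n) ^ (k * m) * exp (- real (k + 1) * (real m / 2 ^ k) / 5)"
  have "real (card (\<Union>S\<in>separated_near k n \<tau>. {\<Phi>\<in>formulas k n m. S \<subseteq> Tset k n m \<Phi>}))
      \<le> V ^ (k + 1) * Q" for \<tau>
  proof -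
    have "finite (separated_near k n \<tau>)"
      by (rule finite_subset[of _ "Pow (Dball k n \<tau> 0 10)"]) (auto simp: separated_near_def)
    moreover have "real (card {\<Phi>\<in>formulas k n m. S \<subseteq> Tset k n m \<Phi>}) \<le> Q"
      if "S \<in> separated_near k n \<tau>" for S
    proof -
      have "finite S" "card S = k + 1" "separated k n S"
        using that card_ge_0_finite[of S] by (auto simp: separated_near_def)
      then show ?thesis
        using card_formulas_Tset_superset_le[OF assms(1-3), of S m] by (simp add: Q_def)
    qed
    ultimately have "real (card (\<Union>S\<in>separated_near k n \<tau>. {\<Phi>\<in>formulas k n m. S \<subseteq> Tset k n m \<Phi>}))
        \<le> (\<Sum>S\<in>separated_near k n \<tau>. Q)"
      by (intro order_trans[OF real_card_UN_le] sum_mono)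
    also have "\<dots> \<le> V ^ (k + 1) * Q"
      using card_separated_near_le[of k n \<tau>] power_mono[OF assms(4)[of \<tau>], of "k + 1"]
      by (simp add: Q_def mult_right_mono)
    finally show ?thesis .
  qed
  then have "real (card (bad_crowded k n m)) \<le> (\<Sum>\<tau>\<in>assignments n. V ^ (k + 1) * Q)"
    unfolding bad_crowded_def
    by (intro order_trans[OF real_card_UN_le[OF finite_assignments]] sum_mono)
  then show ?thesis by (simp add: card_assignments Q_def)
qed

lemma card_bad_Xcount_le:
  assumes "k \<ge> 1" "exp (- real k / 20) * real k ^ 200 \<le> 1 / 2"
  shows "real (card (bad_Xcount k n m))
    \<le> 2 ^ n * real (card {W\<in>Pow {..<n}. real (card W) \<le> 100 * kappa k * real n})
      * (real (2 * n) ^ (k * m) * exp (- real k * (real m / 2 ^ k) / 200))"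
proof -
  define Q where "Q = real (2 * n) ^ (k * m) * exp (- real k * (real m / 2 ^ k) / 200)"
  define \<W> where "\<W> = {W\<in>Pow {..<n}. real (card W) \<le> 100 * kappa k * real n}"
  have "finite \<W>" by (simp add: \<W>_def)
  have "real (card (\<Union>W\<in>\<W>. bad_Xcount_at k n m \<sigma> W)) \<le> real (card \<W>) * Q" for \<sigma>
  proof -
    have "real (card (\<Union>W\<in>\<W>. bad_Xcount_at k n m \<sigma> W)) \<le> (\<Sum>W\<in>\<W>. Q)"
      unfolding bad_Xcount_at_def Q_def using card_formulas_Xcount_large_le[OF assms(1) _ _ assms(2)]
      by (intro order_trans[OF real_card_UN_le[OF \<open>finite \<W>\<close>]] sum_mono) (auto simp: \<W>_def)
    then show ?thesis by simp
  qed
  then have "real (card (bad_Xcount k n m)) \<le> (\<Sum>\<sigma>\<in>assignments n. real (card \<W>) * Q)"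
    unfolding bad_Xcount_def \<W>_def[symmetric]
    by (intro order_trans[OF real_card_UN_le[OF finite_assignments]] sum_mono)
  then show ?thesis by (simp add: card_assignments Q_def \<W>_def)
qed

lemma two_power_eq_exp: "(2::real) ^ n = exp (real n * ln 2)"
  by (simp add: exp_of_nat_mult)

definition beta :: "nat \<Rightarrow> real" where
  "beta k = 195 * (ln (real k))\<^sup>2 / real k"

text \<open>One inequality for each union bound; all hold for large \<open>k\<close> because
  \<open>ball_rate (c * kappa k) \<sim> c (ln k)\<^sup>2 / k\<close> is a small fraction of \<open>beta k\<close>.\<close>

definition admissible :: "nat \<Rightarrow> bool" where
  "admissible k \<longleftrightarrow> 2 \<le> k \<and> 100 * kappa k \<le> 1 \<and> exp (- real k / 20) * real k ^ 200 \<le> 1 / 2 \<and>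
     ball_rate (10 * kappa k) + 2 / (real k)\<^sup>2 \<le> beta k / 10 \<and>
     ln 2 + real (k + 1) * ball_rate (10 * kappa k) - real (k + 1) * beta k / 5 \<le> -1 \<and>
     ln 2 + ball_rate (100 * kappa k) - real k * beta k / 200 \<le> -1"

lemma eventually_admissible: "eventually admissible sequentially"
  unfolding admissible_def beta_def ball_rate_def kappa_def
  by (intro eventually_conj eventually_ge_at_top; real_asymp)

lemma admissible_kappa:
  assumes "admissible k"
  shows "1 \<le> k" "0 < kappa k" "100 * kappa k \<le> 1"
  using assms by (auto simp: admissible_def kappa_def)

context
  fixes k n m :: nat
  assumes adm: "admissible k" and "n > 0" and m_large: "beta k * real n \<le> real m / 2 ^ k"
begin

lemma card_bad_Tset_le_exp:
  "real (card (bad_Tset k n m)) \<le> real (card (formulas k n m)) * exp (- beta k / 10) ^ n"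
proof -
  have "real (card (bad_Tset k n m)) \<le> real (card (formulas k n m)) * exp (- (real m / 2 ^ k) / 10)"
    using card_bad_Tset_le[OF \<open>n > 0\<close>] admissible_kappa[OF adm] by (simp add: card_formulas)
  also have "exp (- (real m / 2 ^ k) / 10) \<le> exp (- beta k / 10) ^ n"
    using m_large by (simp add: exp_of_nat_mult[symmetric] mult.commute)
  finally show ?thesis by (simp add: mult_left_mono)
qed

lemma card_bad_crowded_le_exp:
  "real (card (bad_crowded k n m)) \<le> real (card (formulas k n m)) * exp (- 1) ^ n"
proof -
  define V where "V = exp (real n * ball_rate (10 * kappa k))"
  have "real (card (bad_crowded k n m)) \<le> 2 ^ n * V ^ (k + 1)
      * (real (card (formulas k n m)) * exp (- real (k + 1) * (real m / 2 ^ k) / 5))"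
    using card_bad_crowded_le[OF \<open>n > 0\<close>] card_Dball_le admissible_kappa[OF adm]
    by (simp add: V_def card_formulas)
  also have "\<dots> = real (card (formulas k n m))
      * exp (real n * (ln 2 + real (k + 1) * ball_rate (10 * kappa k)) - real (k + 1) * (real m / 2 ^ k) / 5)"
    by (simp add: two_power_eq_exp[of n] V_def exp_of_nat_mult[symmetric] mult_exp_exp exp_diff exp_minus field_simps)
  also have "\<dots> \<le> real (card (formulas k n m)) * exp (- 1) ^ n"
  proof -
    have "real (k + 1) * (beta k * real n) \<le> real (k + 1) * (real m / 2 ^ k)"
      using m_large by (intro mult_left_mono) auto
    moreover have "real n * (ln 2 + real (k + 1) * ball_rate (10 * kappa k) - real (k + 1) * beta k / 5)
        \<le> real n * (- 1)"
      using adm by (intro mult_left_mono) (auto simp: admissible_def)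
    ultimately have "real n * (ln 2 + real (k + 1) * ball_rate (10 * kappa k))
        - real (k + 1) * (real m / 2 ^ k) / 5 \<le> real n * (- 1)"
      by (simp add: algebra_simps)
    then show ?thesis
      by (simp add: exp_of_nat_mult[symmetric] mult_left_mono)
  qed
  finally show ?thesis .
qed

lemma card_bad_Xcount_le_exp:
  "real (card (bad_Xcount k n m)) \<le> real (card (formulas k n m)) * exp (- 1) ^ n"
proof -
  have "real (card (bad_Xcount k n m))
      \<le> 2 ^ n * real (card {W\<in>Pow {..<n}. real (card W) \<le> 100 * kappa k * real n})
        * (real (card (formulas k n m)) * exp (- real k * (real m / 2 ^ k) / 200))"
    using card_bad_Xcount_le[of k n m] adm admissible_kappa[OF adm]
    by (simp add: admissible_def card_formulas)
  also have "\<dots> \<le> 2 ^ n * exp (real n * ball_rate (100 * kappa k))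
      * (real (card (formulas k n m)) * exp (- real k * (real m / 2 ^ k) / 200))"
    using card_subsets_le_ball_rate[of 100 k n] admissible_kappa[OF adm]
    by (intro mult_right_mono mult_left_mono) auto
  also have "\<dots> = real (card (formulas k n m))
      * exp (real n * (ln 2 + ball_rate (100 * kappa k)) - real k * (real m / 2 ^ k) / 200)"
    by (simp add: two_power_eq_exp[of n] mult_exp_exp exp_diff exp_minus field_simps)
  also have "\<dots> \<le> real (card (formulas k n m)) * exp (- 1) ^ n"
  proof -
    have "real k * (beta k * real n) \<le> real k * (real m / 2 ^ k)"
      using m_large by (intro mult_left_mono) auto
    moreover have "real n * (ln 2 + ball_rate (100 * kappa k) - real k * beta k / 200) \<le> real n * (- 1)"
      using adm by (intro mult_left_mono) (auto simp: admissible_def)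
    ultimately have "real n * (ln 2 + ball_rate (100 * kappa k)) - real k * (real m / 2 ^ k) / 200
        \<le> real n * (- 1)"
      by (simp add: algebra_simps)
    then show ?thesis
      by (simp add: exp_of_nat_mult[symmetric] mult_left_mono)
  qed
  finally show ?thesis .
qed

lemma Dmist_volume_bound:
  "2 ^ n * exp (- (real m / 2 ^ k) / 10) * exp (real n * ball_rate (10 * kappa k))
    \<le> 2 ^ n * exp (- 2 * real n / (real k)\<^sup>2)"
proof -
  have "real n * (ball_rate (10 * kappa k) + 2 / (real k)\<^sup>2) \<le> real n * (beta k / 10)"
    using adm by (intro mult_left_mono) (auto simp: admissible_def)
  then have "real n * ball_rate (10 * kappa k) + real n * (2 / (real k)\<^sup>2) \<le> beta k * real n / 10"
    by (simp only: distrib_left) (simp add: mult.commute)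
  moreover have "beta k * real n / 10 \<le> real m / 2 ^ k / 10"
    using m_large by (rule divide_right_mono) simp
  ultimately have "real n * ball_rate (10 * kappa k) + real n * (2 / (real k)\<^sup>2) \<le> real m / 2 ^ k / 10"
    by linarith
  then have "- (real m / 2 ^ k) / 10 + real n * ball_rate (10 * kappa k) \<le> - 2 * real n / (real k)\<^sup>2"
    by simp
  then show ?thesis
    by (simp add: mult_exp_exp mult.assoc)
qed

lemma prob_quasirandom_ge:
  "1 - (exp (- beta k / 10) ^ n + 2 * exp (- 1) ^ n) \<le> prob_quasirandom k n m"
proof -
  define N where "N = real (card (formulas k n m))"
  define B where "B = bad_Tset k n m \<union> bad_crowded k n m \<union> bad_Xcount k n m"
  have "0 < N" using \<open>n > 0\<close> by (simp add: N_def card_formulas)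
  have "finite B"
    by (rule finite_subset[OF _ finite_formulas[of k n m]])
      (auto simp: B_def bad_Tset_def bad_crowded_def bad_Xcount_def bad_Xcount_at_def)
  then have "card (formulas k n m) - card B \<le> card (formulas k n m - B)"
    by (rule diff_card_le_card_Diff)
  also have "\<dots> \<le> card {\<Phi>\<in>formulas k n m. quasirandom k n m \<Phi>}"
    using quasirandom_if_not_bad[OF \<open>n > 0\<close> _ _ _ _ _ card_Dball_le Dmist_volume_bound]
      admissible_kappa[OF adm] by (intro card_mono) (auto simp: B_def)
  finally have "card (formulas k n m) - card B \<le> card {\<Phi>\<in>formulas k n m. quasirandom k n m \<Phi>}" .
  then have "N - real (card B) \<le> real (card {\<Phi>\<in>formulas k n m. quasirandom k n m \<Phi>})"
    unfolding N_def by linarith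
  moreover have "real (card B) \<le> N * (exp (- beta k / 10) ^ n + 2 * exp (- 1) ^ n)"
  proof -
    have "card B \<le> card (bad_Tset k n m) + card (bad_crowded k n m) + card (bad_Xcount k n m)"
      unfolding B_def by (metis card_Un_le add_right_mono order_trans)
    then show ?thesis
      using card_bad_Tset_le_exp card_bad_crowded_le_exp card_bad_Xcount_le_exp
      by (simp add: N_def algebra_simps)
  qed
  ultimately show ?thesis
    using \<open>0 < N\<close> by (simp add: prob_quasirandom_def N_def[symmetric] field_simps)
qed

end

lemma prob_quasirandom_le_1: "prob_quasirandom k n m \<le> 1"
proof -
  have "card {\<Phi>\<in>formulas k n m. quasirandom k n m \<Phi>} \<le> card (formulas k n m)"
    by (rule card_mono) auto
  then show ?thesis
    unfolding prob_quasirandom_def by (cases "card (formulas k n m) = 0") (auto simp: divide_le_eq_1)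
qed

lemma tendsto_prob_quasirandom:
  assumes "admissible k" and "\<forall>n>0. beta k * real n \<le> real (m n) / 2 ^ k"
  shows "(\<lambda>n. prob_quasirandom k n (m n)) \<longlonglongrightarrow> 1"
proof (rule tendsto_sandwich[OF _ _ _ tendsto_const])
  have "0 < ln (real k)"
    using admissible_kappa[OF assms(1)] by (simp add: kappa_def zero_less_divide_iff)
  then have "0 < beta k"
    using admissible_kappa(1)[OF assms(1)] by (simp add: beta_def)
  then show "(\<lambda>n. 1 - (exp (- beta k / 10) ^ n + 2 * exp (- 1) ^ n)) \<longlonglongrightarrow> 1"
    by (auto intro!: tendsto_eq_intros LIMSEQ_power_zero)
  show "eventually (\<lambda>n. 1 - (exp (- beta k / 10) ^ n + 2 * exp (- 1) ^ n) \<le> prob_quasirandom k n (m n))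
      sequentially"
    using eventually_gt_at_top[of 0] by eventually_elim (use prob_quasirandom_ge assms in blast)
qed (simp add: prob_quasirandom_le_1)

theorem proposition3:
  "\<exists>k0. \<forall>k\<ge>k0. \<forall>m :: nat \<Rightarrow> nat.
     (\<forall>n>0. real (m n) / real n \<ge> 195 * 2 ^ k * (ln (real k))\<^sup>2 / real k) \<longrightarrow>
     (\<lambda>n. prob_quasirandom k n (m n)) \<longlonglongrightarrow> 1"
proof -
  obtain k0 where "\<And>k. k \<ge> k0 \<Longrightarrow> admissible k"
    using eventually_admissible unfolding eventually_sequentially by blast
  moreover have "beta k * real n \<le> real (m n) / 2 ^ k"
    if "n > 0" "real (m n) / real n \<ge> 195 * 2 ^ k * (ln (real k))\<^sup>2 / real k" for k n m
    using that by (simp add: beta_def field_simps)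
  ultimately show ?thesis
    by (blast intro: tendsto_prob_quasirandom)
qed

end
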